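(* Let $G$ be a connected graph with no Hamiltonian path, and let $T$ be a spanning tree of $G$ satisfying (C1) and (C2). Let $b,r\in B(T)$ be such that $V(P_T[b,r])\cap B(T)=\{b,r\}$, orient $P_T[b,r]$ from $b$ to $r$, and let $s\in L(T)$. If $sx\in E(G)$ for some $x\in V(P_T[b,r])\setminus\{b\}$, then $sx^-\notin E(G)$, where $x^-$ is the predecessor of $x$ on $P_T[b,r]$.
   Context: All graphs are finite and simple. For a tree $T$, $L(T)$ is the set of leaves (degree-one vertices) and $B(T)$ the set of branch vertices (degree at least three); $P_T[u,v]$ is the unique path in $T$ between $u$ and $v$. Since $G$ has no Hamiltonian path, every spanning tree of $G$ has a branch vertex. Reducible stem: for a tree $T$ with $B(T)\neq\emptyset$ and each leaf $x\in L(T)$, let $y_x\in B(T)$ be the branch vertex such that the path $P_T[x,y_x]$ contains no branch vertex other than $y_x$; deleting $V(P_T[x,y_x])\setminus\{y_x\}$ from $T$ for all $x\in L(T)$ yields a subtree $R\_Stem(T)$. Condition (C1): $|L(T)|$ is minimum among all spanning trees of $G$. Condition (C2): subject to (C1), $|V(R\_Stem(T))|$ is maximum. *)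

theory Defs
  imports Main
begin

definition simple_graph :: "'a set \<Rightarrow> 'a set set \<Rightarrow> bool" where
  "simple_graph V E \<longleftrightarrow> finite V \<and>
     (\<forall>e\<in>E. \<exists>u v. e = {u, v} \<and> u \<noteq> v \<and> u \<in> V \<and> v \<in> V)"

definition is_path :: "'a set set \<Rightarrow> 'a list \<Rightarrow> bool" where
  "is_path E p \<longleftrightarrow> p \<noteq> [] \<and> distinct p \<and>
     (\<forall>i. Suc i < length p \<longrightarrow> {p ! i, p ! Suc i} \<in> E)"

definition connected_graph :: "'a set \<Rightarrow> 'a set set \<Rightarrow> bool" where
  "connected_graph V E \<longleftrightarrow>
     (\<forall>u\<in>V. \<forall>v\<in>V. \<exists>p. is_path E p \<and> hd p = u \<and> last p = v)"

definition hamiltonian_path :: "'a set \<Rightarrow> 'a set set \<Rightarrow> bool" where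
  "hamiltonian_path V E \<longleftrightarrow> (\<exists>p. is_path E p \<and> set p = V)"

definition is_cycle :: "'a set set \<Rightarrow> 'a list \<Rightarrow> bool" where
  "is_cycle E c \<longleftrightarrow> length c \<ge> 3 \<and> is_path E c \<and> {last c, hd c} \<in> E"

definition is_tree :: "'a set \<Rightarrow> 'a set set \<Rightarrow> bool" where
  "is_tree V F \<longleftrightarrow> simple_graph V F \<and> connected_graph V F \<and> (\<nexists>c. is_cycle F c)"

definition spanning_tree :: "'a set \<Rightarrow> 'a set set \<Rightarrow> 'a set set \<Rightarrow> bool" where
  "spanning_tree V E T \<longleftrightarrow> T \<subseteq> E \<and> is_tree V T"

definition degree :: "'a set set \<Rightarrow> 'a \<Rightarrow> nat" where
  "degree F v = card {e \<in> F. v \<in> e}"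

definition leaves :: "'a set \<Rightarrow> 'a set set \<Rightarrow> 'a set" where
  "leaves V T = {v \<in> V. degree T v = 1}"

definition branches :: "'a set \<Rightarrow> 'a set set \<Rightarrow> 'a set" where
  "branches V T = {v \<in> V. degree T v \<ge> 3}"

definition tree_path :: "'a set set \<Rightarrow> 'a \<Rightarrow> 'a \<Rightarrow> 'a list" where
  "tree_path T u v = (THE p. is_path T p \<and> hd p = u \<and> last p = v)"

definition r_stem :: "'a set \<Rightarrow> 'a set set \<Rightarrow> 'a set" where
  "r_stem V T = V - {w. \<exists>x\<in>leaves V T. \<exists>y\<in>branches V T.
       set (tree_path T x y) \<inter> branches V T = {y} \<and>
       w \<in> set (tree_path T x y) - {y}}"

definition C1 :: "'a set \<Rightarrow> 'a set set \<Rightarrow> 'a set set \<Rightarrow> bool" where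
  "C1 V E T \<longleftrightarrow> spanning_tree V E T \<and>
     (\<forall>T'. spanning_tree V E T' \<longrightarrow> card (leaves V T) \<le> card (leaves V T'))"

definition C2 :: "'a set \<Rightarrow> 'a set set \<Rightarrow> 'a set set \<Rightarrow> bool" where
  "C2 V E T \<longleftrightarrow> C1 V E T \<and>
     (\<forall>T'. C1 V E T' \<longrightarrow> card (r_stem V T') \<le> card (r_stem V T))"

end

theory Submission
  imports Defs
begin

text \<open>
  Suppose that s is adjacent in G to both x and its predecessor x^- on P_T[b,r], and let s'
  be the neighbour of the leaf s in T. Moving s into the edge x^-x, that is passing to
  T' = T - ss' - x^-x + sx + sx^-, gives a spanning tree in which s has degree 2, s' has lost
  one edge and all other degrees are unchanged. If deg_T s' \<noteq> 2, then T' has fewer leaves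
  than T, contradicting (C1). Otherwise T' has the same branch vertices and no more leaves, so
  it satisfies (C1) too. In T' the vertices of P_T[b,r] together with s have degree at least 2
  and can only be left through branch vertices, so no leg of T' (the path from a leaf to the
  nearest branch vertex) passes through s: every leg of T' is a leg of T, or the leg of s with
  s removed. Hence R_Stem(T') contains R_Stem(T) and s, contradicting (C2).
\<close>

section \<open>Reachability and paths\<close>

definition reach :: "'a set set \<Rightarrow> 'a \<Rightarrow> 'a \<Rightarrow> bool" where
  "reach F = (\<lambda>u v. {u, v} \<in> F)\<^sup>*\<^sup>*"

lemma reach_edge: "{u, v} \<in> F \<Longrightarrow> reach F u v"
  by (simp add: reach_def r_into_rtranclp)

lemma reach_trans: "reach F u v \<Longrightarrow> reach F v w \<Longrightarrow> reach F u w"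
  unfolding reach_def by (rule rtranclp_trans)

lemma reach_sym: "reach F u v \<Longrightarrow> reach F v u"
proof -
  have "symp (\<lambda>u v. {u, v} \<in> F)"
    by (auto intro: sympI simp: insert_commute)
  then show "reach F u v \<Longrightarrow> reach F v u"
    unfolding reach_def by (rule sympD[OF symp_rtranclp])
qed

lemma reach_mono: "F \<subseteq> G \<Longrightarrow> reach F u v \<Longrightarrow> reach G u v"
  unfolding reach_def by (erule rtranclp_mono[THEN predicate2D, rotated]) blast

lemma reach_isolated:
  assumes "\<forall>e\<in>F. u \<notin> e" and "reach F u v"
  shows "v = u"
  using assms(2) unfolding reach_def by (induction rule: rtranclp_induct) (use assms(1) in auto)

lemma reach_Diff_edge:
  assumes "reach F u w"
  shows "reach (F - {{u, v}}) u w \<or> reach (F - {{u, v}}) v w"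
  using assms unfolding reach_def
proof (induction rule: rtranclp_induct)
  case (step y z)
  show ?case
  proof (cases "{y, z} = {u, v}")
    case True
    then show ?thesis by (auto simp: doubleton_eq_iff)
  next
    case False
    then have "reach (F - {{u, v}}) y z"
      using step.hyps(2) by (intro reach_edge) simp
    then show ?thesis
      using step.IH reach_trans unfolding reach_def by metis
  qed
qed simp

lemma reach_insert_edge:
  assumes "reach (insert {a, b} F) p q"
  shows "reach F p q \<or> (reach F p a \<and> reach F b q) \<or> (reach F p b \<and> reach F a q)"
  using assms unfolding reach_def
proof (induction rule: rtranclp_induct)
  case (step y z)
  show ?case
  proof (cases "{y, z} = {a, b}")
    case True
    then have "(y = a \<and> z = b) \<or> (y = b \<and> z = a)"
      by (auto simp: doubleton_eq_iff)
    then show ?thesis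
      using step.IH reach_trans reach_sym unfolding reach_def by (metis rtranclp.rtrancl_refl)
  next
    case False
    then have "reach F y z"
      using step.hyps(2) by (intro reach_edge) simp
    then show ?thesis
      using step.IH reach_trans unfolding reach_def by metis
  qed
qed simp

lemma is_path_edge: "is_path F p \<Longrightarrow> Suc i < length p \<Longrightarrow> {p ! i, p ! Suc i} \<in> F"
  unfolding is_path_def by blast

lemma is_path_reach_nth:
  "is_path F p \<Longrightarrow> j < length p \<Longrightarrow> reach F (p ! 0) (p ! j)"
proof (induction j)
  case (Suc j)
  have "{p ! j, p ! Suc j} \<in> F"
    using Suc.prems by (rule is_path_edge)
  with Suc show ?case
    using reach_edge reach_trans by (metis Suc_lessD)
qed (simp add: reach_def)

lemma is_path_reach: "is_path F p \<Longrightarrow> reach F (hd p) (last p)"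
  using is_path_reach_nth[of F p "length p - 1"]
  by (simp add: is_path_def hd_conv_nth last_conv_nth)

lemma is_path_take: "is_path F p \<Longrightarrow> 0 < k \<Longrightarrow> is_path F (take k p)"
  unfolding is_path_def by auto

lemma is_path_tl: "is_path F (u # p) \<Longrightarrow> p \<noteq> [] \<Longrightarrow> is_path F p"
  unfolding is_path_def by (auto elim!: allE[where x = "Suc _"])

lemma is_path_Cons:
  "is_path F p \<Longrightarrow> z \<notin> set p \<Longrightarrow> {z, hd p} \<in> F \<Longrightarrow> is_path F (z # p)"
  unfolding is_path_def by (auto simp: hd_conv_nth nth_Cons split: nat.split)

lemma is_path_snoc:
  "is_path F p \<Longrightarrow> z \<notin> set p \<Longrightarrow> {last p, z} \<in> F \<Longrightarrow> is_path F (p @ [z])"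
  unfolding is_path_def
  by (auto simp: nth_append last_conv_nth less_Suc_eq) (metis diff_Suc_Suc diff_zero)

lemma is_path_if_edges_in: "is_path F p \<Longrightarrow> (\<And>i. Suc i < length p \<Longrightarrow> {p ! i, p ! Suc i} \<in> G) \<Longrightarrow> is_path G p"
  unfolding is_path_def by auto

lemma reach_imp_path:
  "reach F u v \<Longrightarrow> \<exists>p. is_path F p \<and> hd p = u \<and> last p = v"
  unfolding reach_def
proof (induction rule: rtranclp_induct)
  case base
  show ?case by (intro exI[of _ "[u]"]) (simp add: is_path_def)
next
  case (step z z')
  then obtain p where p: "is_path F p" "hd p = u" "last p = z" by blast
  show ?case
  proof (cases "z' \<in> set p")
    case True
    then obtain k where k: "k < length p" "p ! k = z'"
      by (auto simp: in_set_conv_nth)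
    moreover have "hd (take (Suc k) p) = u"
      using p(2) by (simp add: hd_take)
    ultimately show ?thesis
      using is_path_take[OF p(1), of "Suc k"]
      by (intro exI[of _ "take (Suc k) p"]) (simp add: take_Suc_conv_app_nth)
  next
    case False
    then show ?thesis
      using p step.hyps(2) is_path_snoc[OF p(1)]
      by (intro exI[of _ "p @ [z']"]) (simp add: is_path_def)
  qed
qed

lemma connected_graph_iff_reach:
  "connected_graph V F \<longleftrightarrow> (\<forall>u\<in>V. \<forall>v\<in>V. reach F u v)"
  unfolding connected_graph_def using reach_imp_path is_path_reach by metis

section \<open>Trees as connected graphs in which every edge is a bridge\<close>

definition all_bridges :: "'a set set \<Rightarrow> bool" where
  "all_bridges F \<longleftrightarrow> (\<forall>u v. {u, v} \<in> F \<longrightarrow> u \<noteq> v \<longrightarrow> \<not> reach (F - {{u, v}}) u v)"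

lemma all_bridgesD: "all_bridges F \<Longrightarrow> {u, v} \<in> F \<Longrightarrow> u \<noteq> v \<Longrightarrow> \<not> reach (F - {{u, v}}) u v"
  unfolding all_bridges_def by blast

lemma is_path_Diff_edge:
  "is_path F p \<Longrightarrow> (\<And>i. Suc i < length p \<Longrightarrow> {p ! i, p ! Suc i} \<noteq> e) \<Longrightarrow> is_path (F - {e}) p"
  unfolding is_path_def by auto

lemma is_path_Diff_edge_notin:
  assumes "is_path F p" and "u \<notin> set p"
  shows "is_path (F - {{u, w}}) p"
proof (rule is_path_Diff_edge[OF assms(1)])
  fix i assume "Suc i < length p"
  then have "p ! i \<in> set p" "p ! Suc i \<in> set p"
    by auto
  then show "{p ! i, p ! Suc i} \<noteq> {u, w}"
    using assms(2) by (auto simp: doubleton_eq_iff)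
qed

lemma is_path_Cons_Diff_edge:
  assumes "is_path F (u # q)" and "q \<noteq> []" and "hd q \<noteq> w"
  shows "is_path (F - {{u, w}}) (u # q)"
proof (rule is_path_Diff_edge[OF assms(1)])
  fix i assume i: "Suc i < length (u # q)"
  have "u \<notin> set q"
    using assms(1) by (simp add: is_path_def)
  then show "{(u # q) ! i, (u # q) ! Suc i} \<noteq> {u, w}"
    using i assms(2,3) by (cases i) (auto simp: doubleton_eq_iff hd_conv_nth)
qed

lemma is_cycle_not_all_bridges:
  assumes "is_cycle F c"
  shows "\<not> all_bridges F"
proof
  assume bridges: "all_bridges F"
  have len: "3 \<le> length c" and p: "is_path F c" and e: "{last c, hd c} \<in> F"
    using assms unfolding is_cycle_def by auto
  have d: "distinct c"
    using p by (simp add: is_path_def)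
  have cne: "c \<noteq> []"
    using len by auto
  then have ends: "hd c = c ! 0" "last c = c ! (length c - 1)"
    by (simp_all add: hd_conv_nth last_conv_nth)
  have ne: "last c \<noteq> hd c"
    using len ends cne nth_eq_iff_index_eq[OF d, of "length c - 1" 0] by simp
  have "is_path (F - {{last c, hd c}}) c"
  proof (rule is_path_Diff_edge[OF p])
    fix i assume i: "Suc i < length c"
    have "c ! i \<noteq> last c"
      using i ends nth_eq_iff_index_eq[OF d, of i "length c - 1"] by simp
    moreover have "c ! Suc i \<noteq> hd c"
      using i cne ends nth_eq_iff_index_eq[OF d, of "Suc i" 0] by simp
    moreover have "c ! i = hd c \<longrightarrow> c ! Suc i \<noteq> last c"
    proof
      assume "c ! i = hd c"
      then have "i = 0"
        using i cne ends nth_eq_iff_index_eq[OF d, of i 0] by simp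
      then show "c ! Suc i \<noteq> last c"
        using len ends nth_eq_iff_index_eq[OF d, of "Suc 0" "length c - 1"] by simp
    qed
    ultimately show "{c ! i, c ! Suc i} \<noteq> {last c, hd c}"
      by (auto simp: doubleton_eq_iff)
  qed
  then have "reach (F - {{last c, hd c}}) (last c) (hd c)"
    by (intro reach_sym[OF is_path_reach])
  then show False
    using all_bridgesD[OF bridges e ne] by contradiction
qed

lemma acyclic_imp_all_bridges:
  assumes "\<nexists>c. is_cycle F c"
  shows "all_bridges F"
  unfolding all_bridges_def
proof (intro allI impI notI)
  fix u v
  assume e: "{u, v} \<in> F" and ne: "u \<noteq> v" and r: "reach (F - {{u, v}}) u v"
  obtain p where p: "is_path (F - {{u, v}}) p" "hd p = u" "last p = v"
    using reach_imp_path[OF r] by blast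
  have "3 \<le> length p"
  proof (rule ccontr)
    assume "\<not> 3 \<le> length p"
    moreover have "p \<noteq> []"
      using p(1) by (simp add: is_path_def)
    ultimately consider a where "p = [a]" | a c where "p = [a, c]"
      by (auto simp: not_le numeral_3_eq_3 less_Suc_eq length_Suc_conv)
    then show False
      using p ne unfolding is_path_def by cases auto
  qed
  then have "is_cycle F p"
    using p e is_path_if_edges_in[OF p(1)] unfolding is_cycle_def is_path_def
    by (auto simp: insert_commute)
  then show False
    using assms by blast
qed

lemma all_bridges_iff_acyclic: "all_bridges F \<longleftrightarrow> (\<nexists>c. is_cycle F c)"
  using is_cycle_not_all_bridges acyclic_imp_all_bridges by blast

lemma is_path_Cons_edge: "is_path F (u # p) \<Longrightarrow> p \<noteq> [] \<Longrightarrow> {u, hd p} \<in> F"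
  unfolding is_path_def by (cases p) (auto dest!: spec[where x = 0])

lemma is_path_unique:
  assumes "all_bridges F"
  shows "is_path F p \<Longrightarrow> is_path F q \<Longrightarrow> hd p = hd q \<Longrightarrow> last p = last q \<Longrightarrow> p = q"
proof (induction p arbitrary: q)
  case Nil
  then show ?case by (simp add: is_path_def)
next
  case (Cons u p')
  obtain q' where q: "q = u # q'"
    using Cons.prems(2,3) by (cases q) (auto simp: is_path_def)
  have du: "u \<notin> set p'" "u \<notin> set q'"
    using Cons.prems(1,2) q by (auto simp: is_path_def)
  have "p' = [] \<longleftrightarrow> q' = []"
    using Cons.prems(4) q du by (metis last_ConsL last_ConsR last_in_set)
  show ?case
  proof (cases "p' = []")
    case True
    then show ?thesis
      using q \<open>p' = [] \<longleftrightarrow> q' = []\<close> by simp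
  next
    case False
    then have ne: "q' \<noteq> []"
      using \<open>p' = [] \<longleftrightarrow> q' = []\<close> by simp
    have pp': "is_path F p'" and qq': "is_path F q'"
      using is_path_tl[OF Cons.prems(1) False] is_path_tl[of F u q'] Cons.prems(2) q ne by simp_all
    have last: "last p' = last q'"
      using Cons.prems(4) q False ne by simp
    show ?thesis
    proof (cases "hd p' = hd q'")
      case True
      then show ?thesis
        using Cons.IH[OF pp' qq' True last] q by simp
    next
      case hd_ne: False
      let ?w = "hd p'"
      have e: "{u, ?w} \<in> F"
        using is_path_Cons_edge[OF Cons.prems(1) False] .
      have uw: "u \<noteq> ?w"
        using du False hd_in_set by metis
      have "reach (F - {{u, ?w}}) u (last q')"
        using is_path_reach[OF is_path_Cons_Diff_edge[OF _ ne hd_ne[symmetric]]] Cons.prems(2) q ne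
        by simp
      moreover have "reach (F - {{u, ?w}}) ?w (last q')"
        using is_path_reach[OF is_path_Diff_edge_notin[OF pp' du(1)]] last by simp
      ultimately have "reach (F - {{u, ?w}}) u ?w"
        using reach_sym reach_trans by metis
      then show ?thesis
        using all_bridgesD[OF assms e uw] by contradiction
    qed
  qed
qed

lemma is_tree_all_bridges: "is_tree V T \<Longrightarrow> all_bridges T"
  unfolding is_tree_def all_bridges_iff_acyclic by blast

lemma tree_path_eqI:
  assumes "is_tree V T" and "is_path T p" and "hd p = u" and "last p = v"
  shows "tree_path T u v = p"
  unfolding tree_path_def
  using is_path_unique[OF is_tree_all_bridges[OF assms(1)]] assms(2-4)
  by (intro the_equality) auto

lemma is_path_tree_path:
  assumes "is_tree V T" and "u \<in> V" and "v \<in> V"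
  shows "is_path T (tree_path T u v) \<and> hd (tree_path T u v) = u \<and> last (tree_path T u v) = v"
proof -
  have "connected_graph V T"
    using assms(1) by (simp add: is_tree_def)
  then have "reach T u v"
    using assms(2,3) unfolding connected_graph_iff_reach by blast
  then obtain p where p: "is_path T p" "hd p = u" "last p = v"
    by (blast dest: reach_imp_path)
  then have "tree_path T u v = p"
    by (rule tree_path_eqI[OF assms(1)])
  then show ?thesis
    using p by simp
qed

section \<open>Edge exchange\<close>

lemma reach_insert_edge_connected:
  assumes conn: "\<forall>x\<in>V. \<forall>y\<in>V. reach T x y" and u: "u \<in> V"
    and ab: "a \<in> V" "b \<in> V" and sep: "\<not> reach (T - {{u, v}}) a b"
  shows "\<forall>x\<in>V. \<forall>y\<in>V. reach (insert {a, b} (T - {{u, v}})) x y"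
proof -
  let ?H = "T - {{u, v}}" and ?T = "insert {a, b} (T - {{u, v}})"
  have lift: "reach ?H x y \<Longrightarrow> reach ?T x y" for x y
    by (rule reach_mono[of ?H]) auto
  have side: "reach ?H w u \<or> reach ?H w v" if "w \<in> V" for w
    using reach_Diff_edge[of T u w v] conn u that by (meson reach_sym)
  have apart: "\<not> (reach ?H a w \<and> reach ?H b w)" for w
    using sep reach_trans[of ?H a w b] reach_sym[of ?H b w] by blast
  have ab_edge: "reach ?T a b"
    by (rule reach_edge) simp
  have uv: "reach ?T u v"
  proof (cases "reach ?H a u")
    case True
    then have "reach ?H b v"
      using side[OF ab(2)] apart[of u] by blast
    with True show ?thesis
      using reach_trans[OF reach_trans[OF reach_sym[OF lift] ab_edge] lift] by blast
  next
    case False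
    then have "reach ?H a v" "reach ?H b u"
      using side[OF ab(1)] side[OF ab(2)] apart[of v] by blast+
    then show ?thesis
      using reach_trans[OF reach_trans[OF reach_sym[OF lift] reach_sym[OF ab_edge]] lift] by blast
  qed
  have to_u: "reach ?T x u" if "x \<in> V" for x
  proof -
    have "reach ?H x u \<or> reach ?H x v"
      by (rule side[OF that])
    then show ?thesis
    proof
      assume "reach ?H x v"
      from lift[OF this] reach_sym[OF uv] show ?thesis
        by (rule reach_trans)
    qed (rule lift)
  qed
  show ?thesis
  proof (intro ballI)
    fix x y
    assume "x \<in> V" "y \<in> V"
    from to_u[OF \<open>x \<in> V\<close>] reach_sym[OF to_u[OF \<open>y \<in> V\<close>]] show "reach ?T x y"
      by (rule reach_trans)
  qed
qed

lemma all_bridges_insert_edge: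
  assumes bridges: "all_bridges T" and sep: "\<not> reach (T - {{u, v}}) a b"
  shows "all_bridges (insert {a, b} (T - {{u, v}}))"
  unfolding all_bridges_def
proof (intro allI impI notI)
  let ?H = "T - {{u, v}}"
  fix p q
  assume pq: "{p, q} \<in> insert {a, b} ?H" "p \<noteq> q"
    and r: "reach (insert {a, b} ?H - {{p, q}}) p q"
  have ab_notin: "{a, b} \<notin> ?H"
  proof
    assume "{a, b} \<in> ?H"
    then have "reach ?H a b"
      by (rule reach_edge)
    with sep show False
      by contradiction
  qed
  show False
  proof (cases "{p, q} = {a, b}")
    case True
    then have "insert {a, b} ?H - {{p, q}} = ?H"
      using ab_notin by simp
    then have "reach ?H p q"
      using r by simp
    moreover have "(p = a \<and> q = b) \<or> (p = b \<and> q = a)"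
      using True by (simp add: doubleton_eq_iff)
    ultimately have "reach ?H a b"
      using reach_sym by metis
    then show False
      using sep by simp
  next
    case False
    let ?K = "?H - {{p, q}}"
    have "{a, b} \<notin> {{p, q}}"
      using False by auto
    then have "insert {a, b} ?H - {{p, q}} = insert {a, b} ?K"
      by (simp add: insert_Diff_if)
    then have "reach (insert {a, b} ?K) p q"
      using r by simp
    then have cases: "reach ?K p q \<or> (reach ?K p a \<and> reach ?K b q) \<or> (reach ?K p b \<and> reach ?K a q)"
      by (rule reach_insert_edge)
    have pq_H: "{p, q} \<in> ?H"
      using pq(1) False by simp
    then have "\<not> reach (T - {{p, q}}) p q"
      using all_bridgesD[OF bridges _ pq(2)] by simp
    then have "\<not> reach ?K p q"
      using reach_mono[OF Diff_mono[OF Diff_subset subset_refl]] by metis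
    moreover have pq_H: "reach ?H p q"
      using pq_H by (rule reach_edge)
    moreover have lift: "reach ?K x y \<Longrightarrow> reach ?H x y" for x y
      by (rule reach_mono[OF Diff_subset])
    ultimately have "reach ?H a b"
    proof -
      consider "reach ?K p a" "reach ?K b q" | "reach ?K p b" "reach ?K a q"
        using cases \<open>\<not> reach ?K p q\<close> by argo
      then show ?thesis
      proof cases
        case 1
        show ?thesis
          by (rule reach_trans[OF reach_trans[OF reach_sym[OF lift[OF 1(1)]] pq_H] reach_sym[OF lift[OF 1(2)]]])
      next
        case 2
        show ?thesis
          by (rule reach_trans[OF reach_trans[OF lift[OF 2(2)] reach_sym[OF pq_H]] lift[OF 2(1)]])
      qed
    qed
    then show False
      using sep by simp
  qed
qed

lemma simple_graph_edge_vertices: "simple_graph V F \<Longrightarrow> {u, v} \<in> F \<Longrightarrow> u \<in> V \<and> v \<in> V"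
  unfolding simple_graph_def by (fastforce simp: doubleton_eq_iff)

lemma simple_graph_finite_edges: "simple_graph V F \<Longrightarrow> finite F"
  unfolding simple_graph_def by (metis (no_types, lifting) PowI finite_Pow_iff finite_subset insert_subset subsetI empty_subsetI)

lemma simple_graph_exchange:
  "simple_graph V F \<Longrightarrow> a \<in> V \<Longrightarrow> b \<in> V \<Longrightarrow> a \<noteq> b \<Longrightarrow> simple_graph V (insert {a, b} (F - X))"
  unfolding simple_graph_def by auto

lemma is_tree_exchange:
  assumes tree: "is_tree V T" and e: "{u, v} \<in> T" and ab: "a \<in> V" "b \<in> V" "a \<noteq> b"
    and sep: "\<not> reach (T - {{u, v}}) a b"
  shows "is_tree V (insert {a, b} (T - {{u, v}}))"
proof -
  have sg: "simple_graph V T" and conn: "connected_graph V T"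
    using tree by (simp_all add: is_tree_def)
  have "\<forall>x\<in>V. \<forall>y\<in>V. reach (insert {a, b} (T - {{u, v}})) x y"
    using reach_insert_edge_connected[OF _ _ ab(1,2) sep] conn simple_graph_edge_vertices[OF sg e]
    unfolding connected_graph_iff_reach by simp
  moreover have "all_bridges (insert {a, b} (T - {{u, v}}))"
    using all_bridges_insert_edge[OF is_tree_all_bridges[OF tree] sep] .
  ultimately show ?thesis
    using simple_graph_exchange[OF sg ab]
    unfolding is_tree_def all_bridges_iff_acyclic connected_graph_iff_reach by simp
qed

section \<open>Degrees and paths between branch vertices\<close>

lemma card_le_degree: "finite F \<Longrightarrow> A \<subseteq> F \<Longrightarrow> (\<And>e. e \<in> A \<Longrightarrow> w \<in> e) \<Longrightarrow> card A \<le> degree F w"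
  unfolding degree_def by (intro card_mono) auto

lemma degree_exchange:
  assumes "finite F" and "e \<in> F" and "f \<notin> F - {e}"
  shows "degree (insert f (F - {e})) w = degree F w - (if w \<in> e then 1 else 0) + (if w \<in> f then 1 else 0)"
proof -
  let ?A = "{g \<in> F. w \<in> g}"
  have "{g \<in> insert f (F - {e}). w \<in> g} = (if w \<in> f then insert f (?A - {e}) else ?A - {e})"
    by auto
  moreover have "card (?A - {e}) = card ?A - (if w \<in> e then 1 else 0)"
    using assms(1,2) by (simp add: card_Diff_singleton_if)
  moreover have "f \<notin> ?A - {e}"
    using assms(3) by auto
  ultimately show ?thesis
    using assms(1) unfolding degree_def by simp
qed

lemma degree_pos_in_vertices:
  assumes "simple_graph V F" and "0 < degree F z"
  shows "z \<in> V"
proof -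
  obtain e where "e \<in> F" "z \<in> e"
    using assms(2) unfolding degree_def by (metis (no_types, lifting) card.empty empty_Collect_eq less_irrefl)
  then show ?thesis
    using assms(1) unfolding simple_graph_def by fastforce
qed

lemma leaf_unique_edge:
  assumes "simple_graph V T" and "s \<in> leaves V T"
  obtains s' where "{e \<in> T. s \<in> e} = {{s, s'}}"
proof -
  obtain e where e: "{e' \<in> T. s \<in> e'} = {e}"
    using assms(2) unfolding leaves_def degree_def by (auto simp: card_1_singleton_iff)
  then have "e \<in> T" "s \<in> e"
    by auto
  then obtain x y where "e = {x, y}" "x \<noteq> y"
    using assms(1) unfolding simple_graph_def by blast
  with \<open>s \<in> e\<close> obtain s' where "e = {s, s'}"
    by (auto simp: insert_commute)
  with e show ?thesis
    using that by simp
qed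

lemma is_path_interior_edges:
  assumes "is_path F P" and "0 < k" and "Suc k < length P"
  shows "{P ! (k - 1), P ! k} \<in> F" and "{P ! k, P ! Suc k} \<in> F"
    and "{P ! (k - 1), P ! k} \<noteq> {P ! k, P ! Suc k}"
proof -
  have d: "distinct P"
    using assms(1) by (simp add: is_path_def)
  show "{P ! (k - 1), P ! k} \<in> F" "{P ! k, P ! Suc k} \<in> F"
    using is_path_edge[OF assms(1), of "k - 1"] is_path_edge[OF assms(1), of k] assms(2,3)
    by simp_all
  have "P ! (k - 1) \<noteq> P ! Suc k" "P ! (k - 1) \<noteq> P ! k"
    using assms(2,3) nth_eq_iff_index_eq[OF d, of "k - 1" "Suc k"]
      nth_eq_iff_index_eq[OF d, of "k - 1" k] by auto
  then show "{P ! (k - 1), P ! k} \<noteq> {P ! k, P ! Suc k}"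
    by (auto simp: doubleton_eq_iff)
qed

lemma is_path_interior_nth:
  assumes "is_path F P" and "z \<in> set P" and "z \<noteq> hd P" and "z \<noteq> last P"
  obtains k where "0 < k" "Suc k < length P" "z = P ! k"
proof -
  obtain k where k: "k < length P" "z = P ! k"
    using assms(2) by (auto simp: in_set_conv_nth)
  moreover have Pne: "P \<noteq> []"
    using assms(2) by auto
  ultimately have "0 < k" "Suc k < length P"
    using assms(3,4) hd_conv_nth[OF Pne] last_conv_nth[OF Pne]
    by (metis gr0I, metis Suc_lessI diff_Suc_1)
  then show ?thesis
    using that k by simp
qed

lemma branch_path_degree:
  assumes "finite T" and "is_path T P" and "hd P \<in> branches V T" and "last P \<in> branches V T"
    and "z \<in> set P"
  shows "2 \<le> degree T z"
proof (cases "z = hd P \<or> z = last P")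
  case True
  then show ?thesis
    using assms(3,4) unfolding branches_def by auto
next
  case False
  then obtain k where k: "0 < k" "Suc k < length P" "z = P ! k"
    using is_path_interior_nth[OF assms(2,5)] by blast
  then have "card {{P ! (k - 1), P ! k}, {P ! k, P ! Suc k}} \<le> degree T z"
    using is_path_interior_edges[OF assms(2)] assms(1) by (intro card_le_degree) auto
  then show ?thesis
    using is_path_interior_edges(3)[OF assms(2) k(1,2)] by simp
qed

lemma branch_path_closed:
  assumes "finite T" and "is_path T P" and "hd P \<in> branches V T" and "last P \<in> branches V T"
    and "z \<in> set P" and "degree T z \<le> 2" and "{z, z'} \<in> T"
  shows "z' \<in> set P"
proof -
  have "z \<noteq> hd P" "z \<noteq> last P"
    using assms(3,4,6) unfolding branches_def by auto
  then obtain k where k: "0 < k" "Suc k < length P" "z = P ! k"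
    using is_path_interior_nth[OF assms(2,5)] by blast
  let ?e1 = "{P ! (k - 1), P ! k}" and ?e2 = "{P ! k, P ! Suc k}"
  have "{z, z'} = ?e1 \<or> {z, z'} = ?e2"
  proof (rule ccontr)
    assume neither: "\<not> ?thesis"
    have ne: "?e1 \<noteq> ?e2" "?e1 \<noteq> {z, z'}" "?e2 \<noteq> {z, z'}"
      using is_path_interior_edges(3)[OF assms(2) k(1,2)] neither by auto
    have "card {?e1, ?e2, {z, z'}} \<le> degree T z"
      using is_path_interior_edges[OF assms(2) k(1,2)] assms(1,7) k(3)
      by (intro card_le_degree) auto
    moreover have "card {?e1, ?e2, {z, z'}} = 3"
      using ne by simp
    ultimately show False
      using assms(6) by simp
  qed
  moreover have "?e1 \<subseteq> set P" "?e2 \<subseteq> set P"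
    using k by auto
  ultimately show ?thesis
    by (auto simp: doubleton_eq_iff)
qed

lemma is_path_meets_closed_set:
  assumes path: "is_path F R" and start: "hd R \<notin> S" and branch: "set R \<inter> B \<subseteq> {last R}"
    and closed: "\<And>z z'. z \<in> S \<Longrightarrow> z \<notin> B \<Longrightarrow> {z, z'} \<in> F \<Longrightarrow> z' \<in> S"
  shows "set R \<inter> S \<subseteq> {last R}"
proof -
  have Rne: "R \<noteq> []" and d: "distinct R"
    using path by (auto simp: is_path_def)
  have notS: "R ! t \<notin> S" if "Suc t < length R" for t
    using that
  proof (induction t)
    case 0
    then show ?case
      using start Rne by (simp add: hd_conv_nth)
  next
    case (Suc t)
    have "R ! Suc t \<noteq> last R"
      using Suc.prems Rne nth_eq_iff_index_eq[OF d, of "Suc t" "length R - 1"]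
      by (simp add: last_conv_nth)
    moreover have "R ! Suc t \<in> set R"
      using Suc.prems by simp
    ultimately have "R ! Suc t \<notin> B"
      using branch by blast
    moreover have "{R ! Suc t, R ! t} \<in> F"
      using path Suc.prems unfolding is_path_def by (auto simp: insert_commute)
    ultimately show ?case
      using closed Suc by (meson Suc_lessD)
  qed
  show ?thesis
  proof
    fix z
    assume "z \<in> set R \<inter> S"
    then obtain i where i: "i < length R" "R ! i = z" "z \<in> S"
      by (auto simp: in_set_conv_nth)
    then have "i = length R - 1"
      using notS[of i] by (metis Suc_lessI diff_Suc_1)
    then show "z \<in> {last R}"
      using i last_conv_nth[OF Rne] by simp
  qed
qed

section \<open>Legs and the reducible stem\<close>

definition pruned :: "'a set \<Rightarrow> 'a set set \<Rightarrow> 'a set" where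
  "pruned V T = {w. \<exists>x\<in>leaves V T. \<exists>y\<in>branches V T.
     set (tree_path T x y) \<inter> branches V T = {y} \<and> w \<in> set (tree_path T x y) - {y}}"

lemma r_stem_eq_Diff_pruned: "r_stem V T = V - pruned V T"
  unfolding r_stem_def pruned_def by simp

lemma is_path_first_in:
  assumes "is_path F Q" and "last Q \<in> B"
  obtains k where "k < length Q" and "is_path F (take (Suc k) Q)"
    and "set (take (Suc k) Q) \<inter> B = {Q ! k}"
proof -
  have Qne: "Q \<noteq> []"
    using assms(1) by (simp add: is_path_def)
  then have ex: "\<exists>k. k < length Q \<and> Q ! k \<in> B"
    using assms(2) by (intro exI[of _ "length Q - 1"]) (simp add: last_conv_nth)
  define k where "k = (LEAST k. k < length Q \<and> Q ! k \<in> B)"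
  have k: "k < length Q" "Q ! k \<in> B"
    using LeastI_ex[OF ex] unfolding k_def by auto
  have "Q ! j \<notin> B" if "j < k" for j
    using not_less_Least[of j "\<lambda>k. k < length Q \<and> Q ! k \<in> B"] that k unfolding k_def by auto
  then have "set (take k Q) \<inter> B = {}"
    by (auto simp: in_set_conv_nth)
  then have "set (take (Suc k) Q) \<inter> B = {Q ! k}"
    using k by (auto simp: take_Suc_conv_app_nth)
  then show ?thesis
    using that k is_path_take[OF assms(1)] by simp
qed

lemma prunedI:
  "l \<in> leaves V T \<Longrightarrow> y \<in> branches V T \<Longrightarrow> set (tree_path T l y) \<inter> branches V T = {y}
    \<Longrightarrow> w \<in> set (tree_path T l y) \<Longrightarrow> w \<noteq> y \<Longrightarrow> w \<in> pruned V T"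
  unfolding pruned_def by blast

lemma leaf_in_pruned:
  assumes tree: "is_tree V T" and l: "l \<in> leaves V T" and y: "y \<in> branches V T"
  shows "l \<in> pruned V T"
proof -
  let ?Q = "tree_path T l y"
  have "l \<in> V" "y \<in> V"
    using l y unfolding leaves_def branches_def by auto
  then have Q: "is_path T ?Q" "hd ?Q = l" "last ?Q = y"
    using is_path_tree_path[OF tree] by auto
  then have "last ?Q \<in> branches V T"
    using y by simp
  then obtain k where k: "k < length ?Q" and prefix: "is_path T (take (Suc k) ?Q)"
    and first: "set (take (Suc k) ?Q) \<inter> branches V T = {?Q ! k}"
    by (rule is_path_first_in[OF Q(1)])
  have hd_prefix: "hd (take (Suc k) ?Q) = l"
    using Q(2) by (simp add: hd_take)
  have "tree_path T l (?Q ! k) = take (Suc k) ?Q"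
    using tree_path_eqI[OF tree prefix hd_prefix] k by (simp add: take_Suc_conv_app_nth)
  moreover have "l \<in> set (take (Suc k) ?Q)"
    using hd_prefix prefix hd_in_set unfolding is_path_def by metis
  moreover have "l \<notin> branches V T"
    using l unfolding leaves_def branches_def by auto
  ultimately show ?thesis
    using prunedI[OF l, of "?Q ! k"] first by auto
qed

section \<open>Moving a leaf into an edge\<close>

definition move_leaf_into_edge :: "'a set set \<Rightarrow> 'a \<Rightarrow> 'a \<Rightarrow> 'a \<Rightarrow> 'a \<Rightarrow> 'a set set" where
  "move_leaf_into_edge T s s' u v = insert {s, v} (insert {s, u} (T - {{s, s'}}) - {{u, v}})"

locale leaf_into_edge =
  fixes V :: "'a set" and T :: "'a set set" and s s' u v :: 'a
  assumes tree: "is_tree V T"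
    and leaf: "s \<in> leaves V T" and leaf_edge: "{s, s'} \<in> T"
    and edge: "{u, v} \<in> T" and off_edge: "s \<notin> {u, v}"
begin

abbreviation "T1 \<equiv> insert {s, u} (T - {{s, s'}})"

abbreviation "T' \<equiv> move_leaf_into_edge T s s' u v"

lemma simple_graph_T: "simple_graph V T"
  using tree by (simp add: is_tree_def)

lemma finite_edges: "finite T"
  by (rule simple_graph_finite_edges[OF simple_graph_T])

lemma edge_at_leaf:
  assumes "e \<in> T" and "s \<in> e"
  shows "e = {s, s'}"
proof -
  obtain s'' where E: "{e \<in> T. s \<in> e} = {{s, s''}}"
    by (rule leaf_unique_edge[OF simple_graph_T leaf])
  have "{s, s'} \<in> {e \<in> T. s \<in> e}" "e \<in> {e \<in> T. s \<in> e}"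
    using leaf_edge assms by simp_all
  then show ?thesis
    unfolding E by simp
qed

lemma s_neq_s': "s \<noteq> s'"
  using simple_graph_T leaf_edge unfolding simple_graph_def by (fastforce simp: doubleton_eq_iff)

lemma u_neq_v: "u \<noteq> v"
  using simple_graph_T edge unfolding simple_graph_def by (fastforce simp: doubleton_eq_iff)

lemma in_vertices: "s \<in> V" "u \<in> V" "v \<in> V"
  using simple_graph_edge_vertices[OF simple_graph_T] leaf_edge edge by blast+

lemma is_tree_T1: "is_tree V T1"
proof (rule is_tree_exchange[OF tree leaf_edge in_vertices(1,2)])
  show "s \<noteq> u"
    using off_edge by simp
  have "\<forall>e\<in>T - {{s, s'}}. s \<notin> e"
    using edge_at_leaf by (metis DiffE singletonI)
  then show "\<not> reach (T - {{s, s'}}) s u"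
    using reach_isolated \<open>s \<noteq> u\<close> by metis
qed

lemma edge_T1: "{u, v} \<in> T1"
  using edge off_edge by (auto simp: doubleton_eq_iff)

lemma is_tree_T': "is_tree V T'"
  unfolding move_leaf_into_edge_def
proof (rule is_tree_exchange[OF is_tree_T1 edge_T1 in_vertices(1,3)])
  show "s \<noteq> v"
    using off_edge by simp
  show "\<not> reach (T1 - {{u, v}}) s v"
  proof
    assume sv: "reach (T1 - {{u, v}}) s v"
    have "{s, u} \<in> T1 - {{u, v}}"
      using off_edge u_neq_v by (auto simp: doubleton_eq_iff)
    then have "reach (T1 - {{u, v}}) u v"
      using reach_trans[OF reach_sym[OF reach_edge] sv] by simp
    then show False
      using all_bridgesD[OF is_tree_all_bridges[OF is_tree_T1] edge_T1 u_neq_v] by contradiction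
  qed
qed

lemma edges_T':
  assumes "e \<in> T'"
  shows "e = {s, u} \<or> e = {s, v} \<or> (e \<in> T \<and> s \<notin> e)"
proof -
  have "e = {s, v} \<or> e = {s, u} \<or> (e \<in> T \<and> e \<noteq> {s, s'})"
    using assms unfolding move_leaf_into_edge_def by (simp, argo)
  then show ?thesis
    using edge_at_leaf by metis
qed

lemma degree_T1: "degree T1 w = degree T w - (if w \<in> {s, s'} then 1 else 0) + (if w \<in> {s, u} then 1 else 0)"
proof (rule degree_exchange[OF finite_edges leaf_edge])
  show "{s, u} \<notin> T - {{s, s'}}"
    using edge_at_leaf by blast
qed

lemma degree_T'_T1:
  "degree T' w = degree T1 w - (if w \<in> {u, v} then 1 else 0) + (if w \<in> {s, v} then 1 else 0)"
  unfolding move_leaf_into_edge_def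
proof (rule degree_exchange[OF _ edge_T1])
  show "finite T1"
    using finite_edges by simp
  have "{s, v} \<noteq> {s, u}"
    using u_neq_v off_edge by (auto simp: doubleton_eq_iff)
  moreover have "{s, v} \<noteq> {s, s'} \<Longrightarrow> {s, v} \<notin> T"
    using edge_at_leaf by blast
  ultimately show "{s, v} \<notin> T1 - {{u, v}}"
    by auto
qed

lemma degree_T'_leaf: "degree T' s = 2"
  using degree_T'_T1[of s] degree_T1[of s] leaf off_edge unfolding leaves_def by simp

lemma degree_T'_other: "w \<noteq> s \<Longrightarrow> degree T' w = degree T w - (if w = s' then 1 else 0)"
proof -
  assume "w \<noteq> s"
  moreover have "1 \<le> degree T1 v"
    using card_le_degree[of T1 "{{u, v}}" v] finite_edges edge_T1 by simp
  ultimately show ?thesis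
    using degree_T'_T1[of w] degree_T1[of w] u_neq_v by auto
qed

lemma leaves_T'_subset: "leaves V T' \<subseteq> insert s' (leaves V T - {s})"
proof
  fix w
  assume "w \<in> leaves V T'"
  then have w: "w \<in> V" "degree T' w = 1"
    unfolding leaves_def by auto
  then have "w \<noteq> s"
    using degree_T'_leaf by auto
  then show "w \<in> insert s' (leaves V T - {s})"
    using w degree_T'_other[of w] unfolding leaves_def by (cases "w = s'") auto
qed

lemma card_leaves_T'_le: "card (leaves V T') \<le> card (leaves V T)"
proof -
  have fin: "finite (leaves V T)"
    using simple_graph_T unfolding simple_graph_def leaves_def by simp
  have "card (leaves V T') \<le> card (insert s' (leaves V T - {s}))"
    using leaves_T'_subset fin by (intro card_mono) auto
  also have "\<dots> \<le> Suc (card (leaves V T - {s}))"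
    using fin by (simp add: card_insert_if)
  also have "\<dots> = card (leaves V T)"
    using fin leaf by (rule card_Suc_Diff1)
  finally show ?thesis .
qed

lemma card_leaves_T'_less:
  assumes "degree T s' \<noteq> 2"
  shows "card (leaves V T') < card (leaves V T)"
proof -
  have fin: "finite (leaves V T)"
    using simple_graph_T unfolding simple_graph_def leaves_def by simp
  have "s' \<notin> leaves V T'"
    using assms degree_T'_other[of s'] s_neq_s' unfolding leaves_def by auto
  then have "leaves V T' \<subseteq> leaves V T - {s}"
    using leaves_T'_subset by blast
  then have "card (leaves V T') \<le> card (leaves V T - {s})"
    using fin by (intro card_mono) auto
  also have "\<dots> < card (leaves V T)"
    using fin leaf by (rule card_Diff1_less)
  finally show ?thesis .
qed

lemma branches_T':
  assumes "degree T s' \<noteq> 3"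
  shows "branches V T' = branches V T"
proof -
  have "3 \<le> degree T' w \<longleftrightarrow> 3 \<le> degree T w" for w
    using assms degree_T'_leaf degree_T'_other[of w] leaf unfolding leaves_def
    by (cases "w = s") auto
  then show ?thesis
    unfolding branches_def by simp
qed

lemma spanning_tree_T':
  assumes "T \<subseteq> E" and "{s, u} \<in> E" and "{s, v} \<in> E"
  shows "spanning_tree V E T'"
proof -
  have "T' \<subseteq> E"
    using assms unfolding move_leaf_into_edge_def by auto
  then show ?thesis
    using is_tree_T' unfolding spanning_tree_def by simp
qed

lemma C1_T':
  assumes "C1 V E T" and "spanning_tree V E T'"
  shows "C1 V E T'"
  unfolding C1_def
proof (intro conjI allI impI)
  fix T''
  assume "spanning_tree V E T''"
  then have "card (leaves V T) \<le> card (leaves V T'')"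
    using assms(1) unfolding C1_def by blast
  then show "card (leaves V T') \<le> card (leaves V T'')"
    using card_leaves_T'_le by simp
qed (fact assms(2))

lemma C1_imp_degree_s':
  assumes "C1 V E T" and "spanning_tree V E T'"
  shows "degree T s' = 2"
proof (rule ccontr)
  assume "degree T s' \<noteq> 2"
  then have "card (leaves V T') < card (leaves V T)"
    by (rule card_leaves_T'_less)
  then show False
    using assms unfolding C1_def by (meson leD)
qed

end

text \<open>In the application A is the vertex set of P_T[b,r].\<close>

locale leaf_into_closed_set = leaf_into_edge +
  fixes A :: "'a set"
  assumes degree_s': "degree T s' = 2"
    and edge_in: "u \<in> A" "v \<in> A"
    and degree_A: "\<And>z. z \<in> A \<Longrightarrow> 2 \<le> degree T z"
    and closed_A: "\<And>z z'. z \<in> A \<Longrightarrow> degree T z \<le> 2 \<Longrightarrow> {z, z'} \<in> T \<Longrightarrow> z' \<in> A"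
begin

lemma s_notin_A: "s \<notin> A"
  using degree_A leaf unfolding leaves_def by fastforce

lemma s'_notin_A: "s' \<notin> A"
  using closed_A[of s' s] degree_s' leaf_edge s_notin_A by (auto simp: insert_commute)

lemma branches_eq: "branches V T' = branches V T"
  using branches_T' degree_s' by simp

lemma degree_T'_A: "z \<in> A \<Longrightarrow> degree T' z = degree T z"
proof -
  assume "z \<in> A"
  then have "z \<noteq> s" "z \<noteq> s'"
    using s_notin_A s'_notin_A by auto
  then show ?thesis
    using degree_T'_other by simp
qed

lemma degree_T'_insert_s_A: "z \<in> insert s A \<Longrightarrow> 2 \<le> degree T' z"
  using degree_T'_leaf degree_T'_A degree_A by auto

lemma closed_insert_s_A:
  assumes z: "z \<in> insert s A" and nb: "z \<notin> branches V T'" and e: "{z, z'} \<in> T'"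
  shows "z' \<in> insert s A"
proof -
  have "z \<in> V"
    using degree_pos_in_vertices[of V T' z] is_tree_T' degree_T'_insert_s_A[OF z]
    unfolding is_tree_def by simp
  then have deg: "degree T' z \<le> 2"
    using nb unfolding branches_def by simp
  consider "{z, z'} = {s, u}" | "{z, z'} = {s, v}" | "{z, z'} \<in> T" "s \<notin> {z, z'}"
    using edges_T'[OF e] by blast
  then show ?thesis
  proof cases
    case 3
    then have "z \<in> A"
      using z by auto
    moreover have "degree T z \<le> 2"
      using deg degree_T'_A[OF \<open>z \<in> A\<close>] by simp
    ultimately show ?thesis
      using closed_A 3(1) by blast
  qed (use edge_in in \<open>auto simp: doubleton_eq_iff\<close>)
qed

lemma pruned_T'_subset: "pruned V T' \<subseteq> pruned V T - {s}"
proof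
  fix w
  assume "w \<in> pruned V T'"
  then obtain l y where l: "l \<in> leaves V T'" and y: "y \<in> branches V T"
    and leg: "set (tree_path T' l y) \<inter> branches V T = {y}"
    and w: "w \<in> set (tree_path T' l y)" "w \<noteq> y"
    unfolding pruned_def branches_eq by blast
  let ?R = "tree_path T' l y"
  have "l \<in> V" "y \<in> V"
    using l y unfolding leaves_def branches_def by auto
  then have R: "is_path T' ?R" "hd ?R = l" "last ?R = y"
    using is_path_tree_path[OF is_tree_T'] by auto
  have "l \<notin> insert s A"
    using l degree_T'_insert_s_A unfolding leaves_def by fastforce
  then have "set ?R \<inter> insert s A \<subseteq> {y}"
    using is_path_meets_closed_set[OF R(1), of "insert s A" "branches V T'"] R leg closed_insert_s_A
    unfolding branches_eq by auto
  moreover have "s \<noteq> y"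
    using leaf y unfolding leaves_def branches_def by auto
  ultimately have s_notin_R: "s \<notin> set ?R"
    by blast
  have R_T: "is_path T ?R"
  proof (rule is_path_if_edges_in[OF R(1)])
    fix i
    assume i: "Suc i < length ?R"
    then have "?R ! i \<in> set ?R" "?R ! Suc i \<in> set ?R"
      by simp_all
    then have "s \<notin> {?R ! i, ?R ! Suc i}"
      using s_notin_R by auto
    moreover have "{?R ! i, ?R ! Suc i} \<in> T'"
      using i R(1) unfolding is_path_def by blast
    ultimately show "{?R ! i, ?R ! Suc i} \<in> T"
      using edges_T' by fastforce
  qed
  have "w \<noteq> s"
    using w s_notin_R by auto
  moreover have "w \<in> pruned V T"
  proof (cases "l = s'")
    case False
    have "l \<noteq> s"
      using l degree_T'_leaf unfolding leaves_def by auto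
    then have "l \<in> leaves V T"
      using l False degree_T'_other[of l] unfolding leaves_def by auto
    moreover have "tree_path T l y = ?R"
      by (rule tree_path_eqI[OF tree R_T R(2,3)])
    ultimately show ?thesis
      using prunedI y leg w by metis
  next
    case True
    have "is_path T (s # ?R)"
      using is_path_Cons[OF R_T s_notin_R] R(2) True leaf_edge by simp
    then have "tree_path T s y = s # ?R"
      using tree_path_eqI[OF tree] R(3) R_T unfolding is_path_def by simp
    moreover have "set (s # ?R) \<inter> branches V T = {y}"
      using leg leaf unfolding leaves_def branches_def by auto
    ultimately show ?thesis
      using prunedI[OF leaf y] w by simp
  qed
  ultimately show "w \<in> pruned V T - {s}"
    by simp
qed

lemma card_r_stem_T'_greater:
  assumes "b \<in> branches V T"
  shows "card (r_stem V T) < card (r_stem V T')"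
proof -
  have "s \<in> pruned V T"
    by (rule leaf_in_pruned[OF tree leaf assms])
  then have "r_stem V T \<subset> r_stem V T'"
    using pruned_T'_subset in_vertices(1) unfolding r_stem_eq_Diff_pruned by blast
  moreover have "finite V"
    using simple_graph_T unfolding simple_graph_def by simp
  ultimately show ?thesis
    unfolding r_stem_eq_Diff_pruned by (intro psubset_card_mono) auto
qed

lemma not_C2:
  assumes "spanning_tree V E T'" and "b \<in> branches V T"
  shows "\<not> C2 V E T"
proof
  assume "C2 V E T"
  then have "card (r_stem V T') \<le> card (r_stem V T)"
    using C1_T'[OF _ assms(1)] unfolding C2_def by blast
  then show False
    using card_r_stem_T'_greater[OF assms(2)] by simp
qed

end

lemma leaf_into_edge_on_branch_path:
  assumes tree: "is_tree V T" and P: "is_path T P" "hd P \<in> branches V T" "last P \<in> branches V T"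
    and leaf: "s \<in> leaves V T" "{s, s'} \<in> T" and k: "0 < k" "k < length P"
  shows "leaf_into_edge V T s s' (P ! k) (P ! (k - 1))"
proof
  have fin: "finite T"
    using tree simple_graph_finite_edges unfolding is_tree_def by blast
  have "Suc (k - 1) = k"
    using k(1) by simp
  then show "{P ! k, P ! (k - 1)} \<in> T"
    using is_path_edge[OF P(1), of "k - 1"] k(2) by (simp add: insert_commute)
  have "s \<notin> set P"
  proof
    assume "s \<in> set P"
    then have "2 \<le> degree T s"
      by (rule branch_path_degree[OF fin P])
    then show False
      using leaf(1) unfolding leaves_def by simp
  qed
  then show "s \<notin> {P ! k, P ! (k - 1)}"
    using k(2) by auto
qed (fact tree leaf)+

lemma leaf_into_closed_set_on_branch_path:
  assumes tree: "is_tree V T" and P: "is_path T P" "hd P \<in> branches V T" "last P \<in> branches V T"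
    and leaf: "s \<in> leaves V T" "{s, s'} \<in> T" and k: "0 < k" "k < length P"
    and s': "degree T s' = 2"
  shows "leaf_into_closed_set V T s s' (P ! k) (P ! (k - 1)) (set P)"
proof (intro leaf_into_closed_set.intro leaf_into_closed_set_axioms.intro)
  have fin: "finite T"
    using tree simple_graph_finite_edges unfolding is_tree_def by blast
  show "leaf_into_edge V T s s' (P ! k) (P ! (k - 1))"
    by (rule leaf_into_edge_on_branch_path[OF assms(1-8)])
  show "P ! k \<in> set P" "P ! (k - 1) \<in> set P"
    using k(2) by simp_all
  show "2 \<le> degree T z" if "z \<in> set P" for z
    using branch_path_degree[OF fin P that] .
  show "z' \<in> set P" if "z \<in> set P" "degree T z \<le> 2" "{z, z'} \<in> T" for z z'
    using branch_path_closed[OF fin P that] .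
qed (fact s')

theorem claim4p3:
  fixes V :: "'a set" and E T :: "'a set set" and b r s :: 'a and i :: nat
  assumes "simple_graph V E"
    and "connected_graph V E"
    and "\<not> hamiltonian_path V E"
    and "C2 V E T"
    and "b \<in> branches V T" and "r \<in> branches V T"
    and "set (tree_path T b r) \<inter> branches V T = {b, r}"
    and "s \<in> leaves V T"
    and "0 < i" and "i < length (tree_path T b r)"
    and "{s, tree_path T b r ! i} \<in> E"
  shows "{s, tree_path T b r ! (i - 1)} \<notin> E"
  \<comment> \<open>Only (C2) and the fact that b and r are branch vertices are needed.\<close>
proof
  assume pred_edge: "{s, tree_path T b r ! (i - 1)} \<in> E"
  let ?P = "tree_path T b r"
  have C1: "C1 V E T"
    using assms(4) unfolding C2_def by simp
  then have tree: "is_tree V T" and "T \<subseteq> E"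
    unfolding C1_def spanning_tree_def by auto
  have "b \<in> V" "r \<in> V"
    using assms(5,6) unfolding branches_def by auto
  then have P: "is_path T ?P" "hd ?P \<in> branches V T" "last ?P \<in> branches V T"
    using is_path_tree_path[OF tree] assms(5,6) by auto
  obtain s' where "{e \<in> T. s \<in> e} = {{s, s'}}"
    using leaf_unique_edge[OF _ assms(8)] tree unfolding is_tree_def by blast
  then have leaf_edge: "{s, s'} \<in> T"
    by blast
  interpret leaf_into_edge V T s s' "?P ! i" "?P ! (i - 1)"
    by (rule leaf_into_edge_on_branch_path[OF tree P assms(8) leaf_edge assms(9,10)])
  have span: "spanning_tree V E T'"
    by (rule spanning_tree_T'[OF \<open>T \<subseteq> E\<close> assms(11) pred_edge])
  interpret leaf_into_closed_set V T s s' "?P ! i" "?P ! (i - 1)" "set ?P"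
    by (rule leaf_into_closed_set_on_branch_path[OF tree P assms(8) leaf_edge assms(9,10)
          C1_imp_degree_s'[OF C1 span]])
  show False
    using not_C2[OF span assms(5)] assms(4) by contradiction
qed

end
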